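(* Let $C$ be an $A$-code of length $l$ having a basis of divisors consisting of one element $g=(g_1,\ldots,g_l)$. Then $C$ is self-dual (i.e. $C=C^\perp$) if and only if either $l=1$ and $f=g_1^2$ in $\mathbb{F}[x]$, or $l=2$, $g_1=1$ and $g_2^2=-1$ in $A$. Also, $C=C^{\perp R}$ if and only if one of the following holds: (1) $l=1$ and $f=g_1^2$ in $\mathbb{F}[x]$; (2) $l=2$, $g_1=0$ and $g_2=1$; (3) $l=2$, $g_1=1$ and $g_2=0$; (4) $l=2$, $\mathrm{char}\,\mathbb{F}=2$, $g_1=1$ and $g_2$ is any element of $A$.
   Context: Let $\mathbb{F}$ be a finite field, $f(x)\in\mathbb{F}[x]$ monic of degree $m$, $A=\mathbb{F}[x]/\langle f(x)\rangle$, elements identified with polynomials of degree $<m$. An $A$-code of length $l$ is an $A$-submodule of $A^l$; $C^\perp=\{a\in A^l:\sum_ia_ic_i=0\ \forall c\in C\}$, and $C^{\perp R}=\{(c_l,\ldots,c_1):(c_1,\ldots,c_l)\in C^\perp\}$. For $u\in A^l$, $L_{\mathrm{ind}}(u)$ is the smallest index of a nonzero entry and $L_{\mathrm{coef}}(u)$ is that entry. For nonzero $C$, $L_{\mathrm{ind}}(C)=\min_{u\in C}L_{\mathrm{ind}}(u)$, $L_{\mathrm{coef}}(C)$ is the monic polynomial $g$ of minimum degree such that some $c\in C$ has $L_{\mathrm{ind}}(c)=L_{\mathrm{ind}}(C)$ and $L_{\mathrm{coef}}(c)=g$ (such $c$ is a leading element). $C^{(1)}=C$, $C^{(n+1)}=\{c\in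 C^{(n)}:L_{\mathrm{ind}}(c)>L_{\mathrm{ind}}(C^{(n)})\}$ while $C^{(n)}\neq0$; with $k$ largest such that $C^{(k)}\neq 0$, a tuple $(g^{(1)},\ldots,g^{(k)})$ with $g^{(j)}$ a leading element of $C^{(j)}$ is a basis of divisors of $C$. *)

theory Defs
  imports "HOL-Computational_Algebra.Polynomial"
begin

text \<open>The ring A = F[x]/(f) is represented by the polynomials of degree < deg f
  (i.e. the remainders modulo f); multiplication is multiplication modulo f.
  Vectors of A^l are lists of length l; index i of the paper is list position i-1.\<close>

definition A_elem :: "'a::field poly \<Rightarrow> 'a poly \<Rightarrow> bool" where
  "A_elem f a \<longleftrightarrow> a mod f = a"

definition A_vec :: "'a::field poly \<Rightarrow> nat \<Rightarrow> 'a poly list set" where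
  "A_vec f l = {u. length u = l \<and> (\<forall>x\<in>set u. A_elem f x)}"

definition A_code :: "'a::field poly \<Rightarrow> nat \<Rightarrow> 'a poly list set \<Rightarrow> bool" where
  "A_code f l C \<longleftrightarrow> C \<subseteq> A_vec f l \<and> replicate l 0 \<in> C
     \<and> (\<forall>u\<in>C. \<forall>v\<in>C. map2 (+) u v \<in> C)
     \<and> (\<forall>a u. A_elem f a \<longrightarrow> u \<in> C \<longrightarrow> map (\<lambda>c. (a * c) mod f) u \<in> C)"

definition A_dot :: "'a::field poly \<Rightarrow> 'a poly list \<Rightarrow> 'a poly list \<Rightarrow> 'a poly" where
  "A_dot f u v = (sum_list (map2 (*) u v)) mod f"

definition dual_code :: "'a::field poly \<Rightarrow> nat \<Rightarrow> 'a poly list set \<Rightarrow> 'a poly list set" where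
  "dual_code f l C = {a \<in> A_vec f l. \<forall>c\<in>C. A_dot f a c = 0}"

definition dualR_code :: "'a::field poly \<Rightarrow> nat \<Rightarrow> 'a poly list set \<Rightarrow> 'a poly list set" where
  "dualR_code f l C = rev ` dual_code f l C"

definition nonzero_vec :: "'a::zero list \<Rightarrow> bool" where
  "nonzero_vec u \<longleftrightarrow> (\<exists>x\<in>set u. x \<noteq> 0)"

definition L_ind :: "'a::zero list \<Rightarrow> nat" where
  "L_ind u = (LEAST i. i < length u \<and> u ! i \<noteq> 0)"

definition L_coef :: "'a::zero list \<Rightarrow> 'a" where
  "L_coef u = u ! L_ind u"

definition L_ind_code :: "'a::zero list set \<Rightarrow> nat" where
  "L_ind_code C = (LEAST i. \<exists>u\<in>C. nonzero_vec u \<and> L_ind u = i)"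

definition leading_elem :: "'a::field poly list set \<Rightarrow> 'a poly list \<Rightarrow> bool" where
  "leading_elem C c \<longleftrightarrow> c \<in> C \<and> nonzero_vec c \<and> L_ind c = L_ind_code C
     \<and> lead_coeff (L_coef c) = 1
     \<and> (\<forall>c'\<in>C. nonzero_vec c' \<longrightarrow> L_ind c' = L_ind_code C \<longrightarrow> lead_coeff (L_coef c') = 1
          \<longrightarrow> degree (L_coef c) \<le> degree (L_coef c'))"

text \<open>code_seq C n is C^(n+1) of the paper.\<close>
fun code_seq :: "'a::zero list set \<Rightarrow> nat \<Rightarrow> 'a list set" where
  "code_seq C 0 = C"
| "code_seq C (Suc n) = {c \<in> code_seq C n. nonzero_vec c \<longrightarrow> L_ind c > L_ind_code (code_seq C n)}"

definition nonzero_code :: "'a::zero list set \<Rightarrow> bool" where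
  "nonzero_code C \<longleftrightarrow> (\<exists>c\<in>C. nonzero_vec c)"

definition basis_of_divisors :: "'a::field poly list set \<Rightarrow> 'a poly list list \<Rightarrow> bool" where
  "basis_of_divisors C gs \<longleftrightarrow> length gs \<ge> 1
     \<and> (\<forall>j < length gs. nonzero_code (code_seq C j))
     \<and> \<not> nonzero_code (code_seq C (length gs))
     \<and> (\<forall>j < length gs. leading_elem (code_seq C j) (gs ! j))"

end

theory Submission
  imports Defs
begin

text \<open>A single-element basis of divisors makes C the cyclic A-module generated by g.
  Its leading entry h = g_i is monic and divides the i-th entry of every codeword
  (otherwise division with remainder would produce a leading coefficient of smaller
  degree); consequently h divides f and every g_j, and a codeword is determined by its
  i-th entry, so C = A g and the dual of C is cut out by the single equation b \<cdot> g = 0.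
  For l \<ge> 3 this equation has a nonzero solution vanishing at any prescribed position,
  while every nonzero codeword is nonzero at position i; hence C is neither C^\<bottom> nor
  C^\<bottom>R. For l = 1 and l = 2 the two conditions reduce to explicit divisibilities.\<close>

lemma monic_dvd_antisym:
  fixes p q :: "'a::field poly"
  assumes "lead_coeff p = 1" "lead_coeff q = 1" "p dvd q" "q dvd p"
  shows "p = q"
proof -
  obtain k where k: "q = p * k" using assms(3) by blast
  have "p \<noteq> 0" "k \<noteq> 0" using assms k by auto
  then have "degree k = 0"
    using k dvd_imp_degree_le[OF assms(4)] degree_mult_eq[of p k] assms by simp
  moreover have "lead_coeff k = 1" using assms k by (metis lead_coeff_mult mult_1)
  ultimately show ?thesis using k by (metis degree_0_id mult.right_neutral one_pCons)
qed

lemma monic_dvd_1_imp_eq_1: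
  fixes p :: "'a::field poly"
  assumes "lead_coeff p = 1" "p dvd 1"
  shows "p = 1"
  using monic_dvd_antisym[OF assms(1) _ assms(2)] by simp

lemma double_eq_zero_iff:
  fixes p :: "'a::idom"
  shows "p + p = 0 \<longleftrightarrow> p = 0 \<or> CHAR('a) = 2"
proof -
  have two: "(2::'a) = 0 \<longleftrightarrow> CHAR('a) dvd 2"
    using of_nat_eq_0_iff_char_dvd[of 2] by simp
  have "CHAR('a) dvd 2 \<longleftrightarrow> CHAR('a) = 2"
  proof
    assume "CHAR('a) dvd 2"
    moreover from this have "CHAR('a) \<le> 2" by (rule dvd_imp_le) simp
    moreover from \<open>CHAR('a) dvd 2\<close> have "CHAR('a) \<noteq> 0" by (intro notI) simp
    moreover have "CHAR('a) \<noteq> 1" by simp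
    ultimately show "CHAR('a) = 2" by linarith
  qed simp
  moreover have "p + p = 0 \<longleftrightarrow> (2::'a) = 0 \<or> p = 0"
    by (simp only: mult_2[symmetric] mult_eq_0_iff)
  ultimately show ?thesis using two by blast
qed

lemma dvd_sub_mult_iff_dvd_add_mult:
  fixes f t x y :: "'a::comm_ring_1"
  assumes "f dvd t^2 + 1"
  shows "f dvd y - x * t \<longleftrightarrow> f dvd x + y * t"
proof -
  have sub: "y - x * t = y * (t^2 + 1) - t * (x + y * t)"
    by (simp add: algebra_simps power2_eq_square)
  have add: "x + y * t = t * (y - x * t) + x * (t^2 + 1)"
    by (simp add: algebra_simps power2_eq_square)
  show ?thesis
  proof
    assume "f dvd y - x * t"
    then show "f dvd x + y * t" unfolding add by (rule dvd_add[OF dvd_mult dvd_mult[OF assms]])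
  next
    assume "f dvd x + y * t"
    then show "f dvd y - x * t" unfolding sub by (rule dvd_diff[OF dvd_mult[OF assms] dvd_mult])
  qed
qed

lemma L_ind_nonzero:
  assumes "nonzero_vec u"
  shows "L_ind u < length u" "u ! L_ind u \<noteq> 0" "\<And>j. j < L_ind u \<Longrightarrow> u ! j = 0"
proof -
  have ex: "\<exists>k. k < length u \<and> u ! k \<noteq> 0"
    using assms unfolding nonzero_vec_def by (metis in_set_conv_nth)
  show "L_ind u < length u" "u ! L_ind u \<noteq> 0"
    using LeastI_ex[OF ex] unfolding L_ind_def by auto
  fix j assume "j < L_ind u"
  then show "u ! j = 0"
    using not_less_Least[of j] \<open>L_ind u < length u\<close> unfolding L_ind_def by fastforce
qed

lemma length_eq_1_conv: "length u = 1 \<longleftrightarrow> u = [u ! 0]"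
  by (cases u) auto

lemma length_eq_2_conv: "length u = 2 \<longleftrightarrow> u = [u ! 0, u ! 1]"
  by (cases u; cases "tl u") auto

lemma pair_cases: assumes "length b = 2" obtains x y where "b = [x, y]"
  using assms length_eq_2_conv by metis

definition A_scale :: "'a::field poly \<Rightarrow> 'a poly \<Rightarrow> 'a poly list \<Rightarrow> 'a poly list" where
  "A_scale f a u = map (\<lambda>c. (a * c) mod f) u"

lemma length_A_scale [simp]: "length (A_scale f a u) = length u"
  by (simp add: A_scale_def)

lemma A_scale_nth [simp]: "j < length u \<Longrightarrow> A_scale f a u ! j = (a * u ! j) mod f"
  by (simp add: A_scale_def)

lemma A_scale_mod: "A_scale f (a mod f) u = A_scale f a u"
  unfolding A_scale_def by (simp add: mod_mult_left_eq)

lemma sum_list_map2_times_commute: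
  fixes u v :: "'a::comm_semiring_0 list"
  shows "sum_list (map2 (*) u v) = sum_list (map2 (*) v u)"
proof (induction u arbitrary: v)
  case (Cons x u)
  then show ?case by (cases v) (simp_all add: mult.commute)
qed simp

lemma A_dot_commute: "A_dot f u v = A_dot f v u"
  unfolding A_dot_def by (simp add: sum_list_map2_times_commute)

lemma A_dot_scale_right: "A_dot f u (A_scale f a v) = (a * A_dot f u v) mod f"
  unfolding A_dot_def A_scale_def
proof (induction u arbitrary: v)
  case (Cons x u)
  show ?case
  proof (cases v)
    case (Cons y v')
    have "sum_list (map2 (*) (x # u) (map (\<lambda>c. a * c mod f) v)) mod f
        = (x * (a * y mod f) + sum_list (map2 (*) u (map (\<lambda>c. a * c mod f) v')) mod f) mod f"
      using Cons by (simp add: mod_add_right_eq)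
    also have "\<dots> = (x * (a * y mod f) + a * (sum_list (map2 (*) u v') mod f) mod f) mod f"
      using Cons.IH by (simp add: mod_mult_right_eq)
    also have "\<dots> = (x * (a * y) + a * sum_list (map2 (*) u v')) mod f"
      by (rule mod_add_cong) (simp_all add: mod_mult_right_eq)
    also have "\<dots> = a * (sum_list (map2 (*) (x # u) v) mod f) mod f"
      using Cons by (simp add: algebra_simps mod_mult_right_eq)
    finally show ?thesis .
  qed simp
qed simp

lemma A_dot_scale_left: "A_dot f (A_scale f a u) v = (a * A_dot f u v) mod f"
  using A_dot_scale_right[of f v a u] by (simp add: A_dot_commute)

lemma dot_two_point_vector:
  fixes v :: "'a::comm_semiring_1 list"
  assumes "j < length v" "j' < length v" "j \<noteq> j'"
  shows "sum_list (map2 (*) (map (\<lambda>k. if k = j then x else if k = j' then y else 0) [0..<length v]) v)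
           = x * v ! j + y * v ! j'"
proof -
  have "sum_list (map2 (*) (map (\<lambda>k. if k = j then x else if k = j' then y else 0) [0..<length v]) v)
      = (\<Sum>k<length v. (if k = j then x * v ! j else 0) + (if k = j' then y * v ! j' else 0))"
    using assms by (auto simp: sum_list_sum_nth atLeast0LessThan intro!: sum.cong)
  also have "\<dots> = x * v ! j + y * v ! j'"
    using assms by (simp add: sum.distrib)
  finally show ?thesis .
qed

subsection \<open>Codes with a one-element basis of divisors are cyclic\<close>

locale single_divisor_code =
  fixes f :: "'a::field poly" and l :: nat and C :: "'a poly list set" and g :: "'a poly list"
  assumes monic: "lead_coeff f = 1"
    and code: "A_code f l C"
    and basis: "basis_of_divisors C [g]"
begin

abbreviation lead_ind :: nat where "lead_ind \<equiv> L_ind_code C"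
abbreviation lead :: "'a poly" where "lead \<equiv> g ! lead_ind"

lemma f_nonzero: "f \<noteq> 0"
  using monic by auto

lemma code_vec: "c \<in> C \<Longrightarrow> c \<in> A_vec f l"
  using code unfolding A_code_def by auto

lemma length_codeword: "c \<in> C \<Longrightarrow> length c = l"
  using code_vec unfolding A_vec_def by auto

lemma code_add: "u \<in> C \<Longrightarrow> v \<in> C \<Longrightarrow> map2 (+) u v \<in> C"
  using code unfolding A_code_def by auto

lemma code_scale: "A_elem f a \<Longrightarrow> u \<in> C \<Longrightarrow> A_scale f a u \<in> C"
  using code unfolding A_code_def A_scale_def by auto

lemma leading_elem_g: "leading_elem C g"
  using basis unfolding basis_of_divisors_def by auto

lemma g_in_code: "g \<in> C" and nonzero_g: "nonzero_vec g" and L_ind_g: "L_ind g = lead_ind"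
  and lead_monic: "lead_coeff lead = 1"
  using leading_elem_g unfolding leading_elem_def L_coef_def by auto

lemma lead_degree_minimal:
  assumes "c \<in> C" "nonzero_vec c" "L_ind c = lead_ind" "lead_coeff (c ! lead_ind) = 1"
  shows "degree lead \<le> degree (c ! lead_ind)"
proof -
  have "\<forall>c'\<in>C. nonzero_vec c' \<longrightarrow> L_ind c' = lead_ind \<longrightarrow> lead_coeff (c' ! L_ind c') = 1
          \<longrightarrow> degree (g ! L_ind g) \<le> degree (c' ! L_ind c')"
    using leading_elem_g unfolding leading_elem_def L_coef_def by blast
  then show ?thesis using assms unfolding L_ind_g by auto
qed

lemma L_ind_codeword: assumes "c \<in> C" "nonzero_vec c" shows "L_ind c = lead_ind"
proof -
  have "lead_ind \<le> L_ind c"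
    unfolding L_ind_code_def using assms by (intro Least_le) auto
  moreover have "\<not> nonzero_code (code_seq C 1)"
    using basis unfolding basis_of_divisors_def by auto
  then have "\<not> L_ind c > lead_ind"
    using assms unfolding nonzero_code_def by auto
  ultimately show ?thesis by simp
qed

lemma length_g: "length g = l"
  using length_codeword g_in_code .

lemma lead_ind_less: "lead_ind < l"
  using L_ind_nonzero(1)[OF nonzero_g] L_ind_g length_g by simp

lemma g_before_lead: "j < lead_ind \<Longrightarrow> g ! j = 0"
  using L_ind_nonzero(3)[OF nonzero_g] L_ind_g by simp

lemma lead_nonzero: "lead \<noteq> 0"
  using lead_monic by auto

lemma codeword_lead_nonzero: "c \<in> C \<Longrightarrow> nonzero_vec c \<Longrightarrow> c ! lead_ind \<noteq> 0"
  using L_ind_codeword[of c] L_ind_nonzero(2)[of c] by simp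

lemma codeword_eq_0: assumes "c \<in> C" "c ! lead_ind = 0" "j < l" shows "c ! j = 0"
proof (rule ccontr)
  assume "c ! j \<noteq> 0"
  then have "nonzero_vec c"
    using assms(3) length_codeword[OF assms(1)] unfolding nonzero_vec_def by auto
  then show False using codeword_lead_nonzero assms(1,2) by blast
qed

lemma degree_f_pos: "0 < degree f"
proof (rule ccontr)
  assume "\<not> 0 < degree f"
  then have "degree f = 0" by simp
  then have "f = 1" using monic by (metis degree_0_id one_pCons)
  then have "x = 0" if "x \<in> set g" for x
    using that code_vec[OF g_in_code] unfolding A_vec_def A_elem_def by auto
  then show False
    using nonzero_g unfolding nonzero_vec_def by auto
qed

lemma A_elem_iff: "A_elem f a \<longleftrightarrow> degree a < degree f"
proof
  assume "A_elem f a"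
  then show "degree a < degree f"
    using degree_mod_less[OF f_nonzero, of a] degree_f_pos unfolding A_elem_def by (metis degree_0)
qed (simp add: A_elem_def mod_poly_less)

lemma A_elem_mod: "A_elem f (a mod f)"
  by (simp add: A_elem_def)

lemma degree_codeword: assumes "c \<in> C" "j < l" shows "degree (c ! j) < degree f"
proof -
  have "c ! j \<in> set c" using assms length_codeword by simp
  then show ?thesis using code_vec[OF assms(1)] A_elem_iff unfolding A_vec_def by blast
qed

lemma A_scale_g_in_code: "A_scale f a g \<in> C"
  using code_scale[OF A_elem_mod g_in_code, of a] unfolding A_scale_mod .

lemma lead_degree_le: assumes "c \<in> C" "c ! lead_ind \<noteq> 0"
  shows "degree lead \<le> degree (c ! lead_ind)"
proof -
  define r where "r = c ! lead_ind"
  define e where "e = A_scale f [:inverse (lead_coeff r):] c"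
  have "A_elem f [:inverse (lead_coeff r):]"
    using degree_f_pos by (simp add: A_elem_iff)
  then have e: "e \<in> C" unfolding e_def using code_scale assms(1) by blast
  have "e ! lead_ind = smult (inverse (lead_coeff r)) r mod f"
    unfolding e_def r_def using A_scale_nth length_codeword[OF assms(1)] lead_ind_less by simp
  also have "\<dots> = smult (inverse (lead_coeff r)) r"
    using degree_codeword[OF assms(1) lead_ind_less] unfolding r_def by (intro mod_poly_less) simp
  finally have e_lead: "e ! lead_ind = smult (inverse (lead_coeff r)) r" .
  have r: "r \<noteq> 0" using assms(2) unfolding r_def .
  then have "e ! lead_ind \<noteq> 0" "lead_coeff (e ! lead_ind) = 1"
    using e_lead by auto
  moreover have "e ! lead_ind \<in> set e"
    using length_codeword[OF e] lead_ind_less by simp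
  ultimately have "nonzero_vec e"
    unfolding nonzero_vec_def by blast
  then have "degree lead \<le> degree (e ! lead_ind)"
    using lead_degree_minimal e L_ind_codeword \<open>lead_coeff (e ! lead_ind) = 1\<close> by blast
  then show ?thesis using e_lead r unfolding r_def by simp
qed

text \<open>Division with remainder by the leading entry stays inside C, so minimality of its
  degree forces the remainder to vanish.\<close>
lemma lead_dvd_codeword_lead: assumes c: "c \<in> C" shows "lead dvd c ! lead_ind"
proof (rule ccontr)
  define q r where "q = c ! lead_ind div lead" and "r = c ! lead_ind mod lead"
  assume "\<not> lead dvd c ! lead_ind"
  then have r: "r \<noteq> 0" "degree r < degree lead"
    using degree_mod_less[OF lead_nonzero] unfolding r_def by (auto simp: mod_eq_0_iff_dvd)
  have qr: "- q * lead = r - c ! lead_ind"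
    using div_mult_mod_eq[of "c ! lead_ind" lead] unfolding q_def r_def by (simp add: algebra_simps)
  define d where "d = map2 (+) c (A_scale f (- q) g)"
  have d: "d \<in> C" unfolding d_def using code_add c A_scale_g_in_code by blast
  have "d ! lead_ind = c ! lead_ind + (- q * lead) mod f"
    unfolding d_def using length_codeword[OF c] length_g lead_ind_less by simp
  also have "(- q * lead) mod f = r - c ! lead_ind"
    unfolding qr
    using r degree_codeword[OF c lead_ind_less] degree_codeword[OF g_in_code lead_ind_less]
      degree_diff_le_max[of r "c ! lead_ind"] by (intro mod_poly_less) linarith
  finally have "d ! lead_ind = r" by simp
  then show False using lead_degree_le[OF d] r by simp
qed

lemma lead_dvd_f: "lead dvd f"
proof -
  have "A_scale f (f div lead) g ! lead_ind = (f div lead * lead) mod f"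
    using length_g lead_ind_less by simp
  then have "lead dvd (f div lead * lead) mod f"
    using lead_dvd_codeword_lead[OF A_scale_g_in_code] by metis
  moreover have "(f div lead * lead) mod f = - (f mod lead)"
  proof -
    have "(f div lead * lead) mod f = (- (f mod lead)) mod f"
      by (simp add: mod_diff_left_eq[symmetric] minus_mod_eq_div_mult[symmetric])
    also have "\<dots> = - (f mod lead)"
      using degree_mod_less[OF lead_nonzero, of f] degree_codeword[OF g_in_code lead_ind_less]
      by (intro mod_poly_less) auto
    finally show ?thesis .
  qed
  ultimately have "lead dvd f mod lead" by simp
  then have "f mod lead = 0"
    using degree_mod_less[OF lead_nonzero, of f] dvd_imp_degree_le[of lead "f mod lead"] by fastforce
  then show ?thesis by (simp add: mod_eq_0_iff_dvd)
qed

text \<open>The difference of c and this multiple of g is a codeword vanishing at the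
  leading index, hence zero.\<close>
lemma codeword_eq_A_scale: assumes c: "c \<in> C" shows "c = A_scale f (c ! lead_ind div lead) g"
proof -
  define q where "q = c ! lead_ind div lead"
  define e where "e = map2 (+) c (A_scale f (- q) g)"
  have e: "e \<in> C" unfolding e_def using code_add c A_scale_g_in_code by blast
  have e_nth: "e ! j = c ! j - (q * g ! j) mod f" if "j < l" for j
    unfolding e_def using that length_codeword[OF c] length_g
    by (simp add: poly_mod_minus_left)
  have "c ! lead_ind = q * lead"
    unfolding q_def using lead_dvd_codeword_lead[OF c] by simp
  then have "e ! lead_ind = 0"
    using e_nth[OF lead_ind_less] mod_poly_less[OF degree_codeword[OF c lead_ind_less]] by simp
  then have "c ! j = (q * g ! j) mod f" if "j < l" for j
    using codeword_eq_0[OF e _ that] e_nth[OF that] by simp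
  then show ?thesis
    unfolding q_def[symmetric] using length_codeword[OF c] length_g A_scale_nth
    by (intro nth_equalityI) (auto simp: A_scale_def)
qed

lemma code_eq_range: "C = range (\<lambda>a. A_scale f a g)"
  using codeword_eq_A_scale A_scale_g_in_code by blast

lemma lead_dvd_g: assumes j: "j < l" shows "lead dvd g ! j"
proof -
  have "A_scale f (f div lead) g ! lead_ind = 0"
    using A_scale_nth length_g lead_ind_less lead_dvd_f by (simp add: dvd_div_mult_self)
  then have "A_scale f (f div lead) g ! j = 0"
    using codeword_eq_0[OF A_scale_g_in_code _ j] by blast
  then have "f div lead * lead dvd f div lead * g ! j"
    using A_scale_nth j length_g lead_dvd_f by (simp add: mod_eq_0_iff_dvd dvd_div_mult_self)
  moreover have "f div lead \<noteq> 0" using f_nonzero lead_dvd_f by auto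
  ultimately show ?thesis by (simp add: mult.commute[of "f div lead"])
qed

lemma lead_dvd_codeword: assumes "c \<in> C" "j < l" shows "lead dvd c ! j"
proof -
  obtain a where "c = A_scale f a g" using assms(1) code_eq_range by blast
  then have "c ! j = (a * g ! j) mod f" using A_scale_nth assms(2) length_g by simp
  then show ?thesis
    using lead_dvd_g[OF assms(2)] lead_dvd_f by (simp add: dvd_mod)
qed

lemma lead_eq_1_if_entry_1: "c \<in> C \<Longrightarrow> j < l \<Longrightarrow> c ! j = 1 \<Longrightarrow> lead = 1"
  using lead_dvd_codeword monic_dvd_1_imp_eq_1[OF lead_monic] by metis

lemma dual_code_eq: "dual_code f l C = {b \<in> A_vec f l. A_dot f b g = 0}"
proof -
  have "(\<forall>c\<in>C. A_dot f b c = 0) \<longleftrightarrow> A_dot f b g = 0" for b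
  proof
    assume "A_dot f b g = 0"
    then show "\<forall>c\<in>C. A_dot f b c = 0"
      using code_eq_range by (auto simp: A_dot_scale_right)
  qed (use g_in_code in blast)
  then show ?thesis unfolding dual_code_def by blast
qed

lemma mem_dualR_code_iff: "b \<in> dualR_code f l C \<longleftrightarrow> rev b \<in> dual_code f l C"
  unfolding dualR_code_def by (metis image_iff rev_rev_ident)

lemma code_subset_dual_iff: "C \<subseteq> dual_code f l C \<longleftrightarrow> A_dot f g g = 0"
proof
  assume "A_dot f g g = 0"
  then show "C \<subseteq> dual_code f l C"
    unfolding dual_code_eq using code_eq_range code_vec by (auto simp: A_dot_scale_left)
qed (use g_in_code dual_code_eq in auto)

lemma code_subset_dualR_iff: "C \<subseteq> dualR_code f l C \<longleftrightarrow> A_dot f (rev g) g = 0"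
proof
  assume dot: "A_dot f (rev g) g = 0"
  show "C \<subseteq> dualR_code f l C"
  proof
    fix c assume c: "c \<in> C"
    then obtain a where "c = A_scale f a g" using code_eq_range by blast
    then have "rev c = A_scale f a (rev g)" by (simp add: A_scale_def rev_map)
    then have "A_dot f (rev c) g = 0" using dot by (simp add: A_dot_scale_left)
    moreover have "rev c \<in> A_vec f l" using code_vec[OF c] unfolding A_vec_def by simp
    ultimately show "c \<in> dualR_code f l C" unfolding mem_dualR_code_iff dual_code_eq by simp
  qed
qed (use g_in_code mem_dualR_code_iff dual_code_eq in auto)

lemma mem_dual_code_iff:
  "b \<in> dual_code f l C \<longleftrightarrow> length b = l \<and> (\<forall>x\<in>set b. degree x < degree f) \<and> A_dot f b g = 0"
  unfolding dual_code_eq A_vec_def A_elem_iff by blast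

lemma length_dual_code: "b \<in> dual_code f l C \<Longrightarrow> length b = l"
  using mem_dual_code_iff by blast

lemma length_dualR_code: "b \<in> dualR_code f l C \<Longrightarrow> length b = l"
  using length_dual_code mem_dualR_code_iff by fastforce

subsection \<open>Length at least three\<close>

lemma dual_has_vector_vanishing_at:
  assumes "3 \<le> l" "p < l"
  obtains b where "b \<in> dual_code f l C" "nonzero_vec b" "b ! p = 0"
proof -
  obtain j j' where jj: "j < l" "j' < l" "j \<noteq> j'" "p \<noteq> j" "p \<noteq> j'"
    using assms by (intro that[of "if p = 0 then 1 else 0" "if p \<le> 1 then 2 else 1"]) auto
  define x where "x = (if g ! j = 0 then 1 else g ! j')"
  define y where "y = (if g ! j = 0 then 0 else - g ! j)"
  define b where "b = map (\<lambda>k. if k = j then x else if k = j' then y else 0) [0..<l]"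
  have "degree x < degree f" "degree y < degree f"
    unfolding x_def y_def using degree_f_pos degree_codeword[OF g_in_code] jj by auto
  moreover have "x * g ! j + y * g ! j' = 0"
    unfolding x_def y_def by (simp add: algebra_simps)
  ultimately have "b \<in> dual_code f l C"
    unfolding mem_dual_code_iff A_dot_def b_def
    using dot_two_point_vector[of j g j' x y] jj length_g degree_f_pos by auto
  moreover have "b ! j = x" "b ! j' = y" "b ! p = 0" "length b = l"
    unfolding b_def using jj assms(2) by auto
  moreover have "x \<noteq> 0 \<or> y \<noteq> 0"
    unfolding x_def y_def by simp
  ultimately show ?thesis
    using that jj unfolding nonzero_vec_def by (metis nth_mem)
qed

lemma not_self_dual_if_3_le: "3 \<le> l \<Longrightarrow> C \<noteq> dual_code f l C"
  using dual_has_vector_vanishing_at[OF _ lead_ind_less] codeword_lead_nonzero by metis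

lemma not_self_dualR_if_3_le: assumes "3 \<le> l" shows "C \<noteq> dualR_code f l C"
proof
  assume self_dual: "C = dualR_code f l C"
  obtain b where b: "b \<in> dual_code f l C" "nonzero_vec b" "b ! (l - 1 - lead_ind) = 0"
    using dual_has_vector_vanishing_at[OF assms, of "l - 1 - lead_ind"] lead_ind_less by auto
  have "rev b \<in> C" using self_dual b(1) mem_dualR_code_iff by auto
  moreover have "nonzero_vec (rev b)" using b(2) unfolding nonzero_vec_def by simp
  moreover have "rev b ! lead_ind = 0"
    using b(3) length_dual_code[OF b(1)] lead_ind_less by (simp add: rev_nth)
  ultimately show False using codeword_lead_nonzero by blast
qed

subsection \<open>Length one\<close>

lemma dualR_eq_dual_if_1: assumes "l = 1" shows "dualR_code f l C = dual_code f l C"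
proof -
  have "rev b = b" if "b \<in> dual_code f l C" for b
    using length_dual_code[OF that] assms length_eq_1_conv by (metis rev_singleton_conv)
  then show ?thesis unfolding dualR_code_def by simp
qed

lemma self_dual_iff_1: assumes l: "l = 1" shows "C = dual_code f l C \<longleftrightarrow> f = (g ! 0)^2"
proof -
  define u where "u = g ! 0"
  have g: "g = [u]" using length_g l length_eq_1_conv unfolding u_def by metis
  have u: "lead_coeff u = 1" "u dvd f" "u \<noteq> 0"
    using lead_monic lead_dvd_f lead_nonzero lead_ind_less l unfolding u_def by auto
  have mem: "[x] \<in> dual_code f l C \<longleftrightarrow> degree x < degree f \<and> f dvd x * u" for x
    unfolding mem_dual_code_iff g A_dot_def using l by (simp add: mod_eq_0_iff_dvd)
  have code_dvd: "u dvd x" if "[x] \<in> C" for x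
    using lead_dvd_codeword[OF that, of 0] lead_ind_less l unfolding u_def by simp
  have sub: "C \<subseteq> dual_code f l C \<longleftrightarrow> f dvd u^2"
    unfolding code_subset_dual_iff g A_dot_def by (simp add: mod_eq_0_iff_dvd power2_eq_square)
  show ?thesis unfolding u_def[symmetric]
  proof
    assume self_dual: "C = dual_code f l C"
    then have f_dvd: "f dvd u^2" using sub by simp
    have "degree u \<noteq> 0"
    proof
      assume "degree u = 0"
      then have "u = 1" using u(1) by (metis degree_0_id one_pCons)
      then show False using f_dvd degree_f_pos f_nonzero by (simp add: is_unit_iff_degree)
    qed
    obtain k where k: "f = u * k" using u(2) by blast
    then have "degree k < degree f" using \<open>degree u \<noteq> 0\<close> f_nonzero by (simp add: degree_mult_eq)
    then have "[k] \<in> C" using self_dual mem k by (simp add: mult.commute)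
    then have "u^2 dvd f" using code_dvd k by (simp add: power2_eq_square)
    then show "f = u^2"
      using monic_dvd_antisym[OF monic _ f_dvd] u(1) by (simp add: lead_coeff_power)
  next
    assume f: "f = u^2"
    have "b \<in> C" if b: "b \<in> dual_code f l C" for b
    proof -
      obtain x where x: "b = [x]" using length_dual_code[OF b] l length_eq_1_conv by metis
      then have "u * u dvd u * x" using b mem f by (simp add: power2_eq_square mult.commute)
      then obtain t where "x = u * t" using u(3) by auto
      moreover have "degree x < degree f" using b mem x by simp
      ultimately have "A_scale f t g = b" using x g by (simp add: A_scale_def mod_poly_less mult.commute)
      then show ?thesis using A_scale_g_in_code by metis
    qed
    then show "C = dual_code f l C" using sub f by auto
  qed
qed

subsection \<open>Length two\<close>

lemma mem_dual_code_2:
  assumes "l = 2"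
  shows "[x, y] \<in> dual_code f l C
    \<longleftrightarrow> degree x < degree f \<and> degree y < degree f \<and> (x * g ! 0 + y * g ! 1) mod f = 0"
proof -
  obtain g0 g1 where "g = [g0, g1]" using pair_cases length_g assms by metis
  then show ?thesis unfolding mem_dual_code_iff A_dot_def using assms by simp
qed

lemma mem_dualR_code_2:
  "l = 2 \<Longrightarrow> [x, y] \<in> dualR_code f l C
    \<longleftrightarrow> degree x < degree f \<and> degree y < degree f \<and> (y * g ! 0 + x * g ! 1) mod f = 0"
  unfolding mem_dualR_code_iff using mem_dual_code_2[of y x] by auto

lemma quotient_by_lead_2:
  assumes "l = 2" "lead_ind = 0"
  obtains w where "degree w < degree f" "(w * g ! 0 + g ! 1) mod f = 0"
proof -
  obtain v where v: "g ! 1 = g ! 0 * v" using lead_dvd_g[of 1] assms by auto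
  have "((- v) mod f * g ! 0 + g ! 1) mod f = ((- v) * g ! 0 + g ! 1) mod f"
    by (rule mod_add_cong[OF mod_mult_left_eq]) simp
  also have "\<dots> = 0" using v by (simp add: algebra_simps)
  finally show ?thesis
    using that[of "(- v) mod f"] degree_mod_less[OF f_nonzero] degree_f_pos
    by (cases "(- v) mod f = 0") auto
qed

lemma graph_in_code_2:
  assumes "l = 2" "g ! 0 = 1" "degree x < degree f"
  shows "[x, (x * g ! 1) mod f] \<in> C"
proof -
  obtain g0 g1 where g: "g = [g0, g1]" using pair_cases length_g assms(1) by metis
  then have "A_scale f x g = [x, (x * g ! 1) mod f]"
    using assms(2,3) mod_poly_less by (simp add: A_scale_def)
  then show ?thesis using A_scale_g_in_code by metis
qed

lemma lead_ind_eq_0_if_self_dual_2: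
  assumes l: "l = 2" and self_dual: "C = dual_code f l C"
  shows "lead_ind = 0"
proof (rule ccontr)
  assume "lead_ind \<noteq> 0"
  then have "lead_ind = 1" "g ! 0 = 0" using lead_ind_less l g_before_lead by auto
  then have "[1, 0] \<in> C" using self_dual mem_dual_code_2[OF l] degree_f_pos by simp
  moreover have "nonzero_vec [1, 0::'a poly]" unfolding nonzero_vec_def by simp
  ultimately show False using codeword_lead_nonzero \<open>lead_ind = 1\<close> by fastforce
qed

lemma self_dual_iff_2:
  assumes l: "l = 2"
  shows "C = dual_code f l C \<longleftrightarrow> g ! 0 = 1 \<and> (g ! 1)^2 mod f = (-1) mod f"
proof
  assume self_dual: "C = dual_code f l C"
  note lead_ind = lead_ind_eq_0_if_self_dual_2[OF l self_dual]
  obtain w where "degree w < degree f" "(w * g ! 0 + g ! 1) mod f = 0"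
    using quotient_by_lead_2[OF l lead_ind] .
  then have "[w, 1] \<in> C" using self_dual mem_dual_code_2[OF l] degree_f_pos by simp
  then have g0: "g ! 0 = 1" using lead_eq_1_if_entry_1[of "[w, 1]" 1] l lead_ind by simp
  obtain t where g: "g = [1, t]" using pair_cases length_g l g0 by (metis nth_Cons_0)
  have "g \<in> dual_code f l C" using self_dual g_in_code by simp
  then have "f dvd t^2 - (-1)"
    using mem_dual_code_2[OF l, of 1 t] g by (simp add: mod_eq_0_iff_dvd power2_eq_square add.commute)
  then have "t^2 mod f = (-1) mod f" by (subst mod_eq_dvd_iff)
  then show "g ! 0 = 1 \<and> (g ! 1)^2 mod f = (-1) mod f" using g by simp
next
  assume asm: "g ! 0 = 1 \<and> (g ! 1)^2 mod f = (-1) mod f"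
  define t where "t = g ! 1"
  have g: "g = [1, t]" using length_g l asm length_eq_2_conv unfolding t_def by metis
  have f_dvd: "f dvd t^2 + 1"
    using asm mod_eq_dvd_iff[THEN iffD1, of "t^2" f "-1"] unfolding t_def by simp
  have "A_dot f g g = 0"
    using g f_dvd unfolding A_dot_def by (simp add: mod_eq_0_iff_dvd power2_eq_square add.commute)
  then have "C \<subseteq> dual_code f l C" using code_subset_dual_iff by blast
  moreover have "b \<in> C" if b: "b \<in> dual_code f l C" for b
  proof -
    obtain x y where xy: "b = [x, y]" using pair_cases length_dual_code[OF b] l by metis
    then have "degree x < degree f" "degree y < degree f" "f dvd x + y * t"
      using b mem_dual_code_2[OF l] g by (auto simp: mod_eq_0_iff_dvd)
    then have "(x * t) mod f = y"
      using dvd_sub_mult_iff_dvd_add_mult[OF f_dvd] mod_poly_less by (metis mod_eq_dvd_iff)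
    then show ?thesis using graph_in_code_2[OF l _ \<open>degree x < degree f\<close>] xy g by simp
  qed
  ultimately show "C = dual_code f l C" by blast
qed

lemma self_dualR_iff_2_lead_ind_1:
  assumes l: "l = 2" and lead_ind: "lead_ind = 1"
  shows "C = dualR_code f l C \<longleftrightarrow> g ! 1 = 1"
proof
  assume "C = dualR_code f l C"
  moreover have "g ! 0 = 0" using g_before_lead lead_ind by simp
  ultimately have "[0, 1] \<in> C" using mem_dualR_code_2[OF l] degree_f_pos by simp
  then show "g ! 1 = 1" using lead_eq_1_if_entry_1[of "[0, 1]" 1] l lead_ind by simp
next
  assume "g ! 1 = 1"
  then have g: "g = [0, 1]"
    using g_before_lead[of 0] lead_ind length_g l length_eq_2_conv by (metis zero_less_one)
  then have "C \<subseteq> dualR_code f l C" using code_subset_dualR_iff by (simp add: A_dot_def)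
  moreover have "b \<in> C" if b: "b \<in> dualR_code f l C" for b
  proof -
    obtain x y where xy: "b = [x, y]" using pair_cases length_dualR_code[OF b] l by metis
    then have "x mod f = 0" "degree x < degree f" "degree y < degree f"
      using b mem_dualR_code_2[OF l] g by auto
    then have "x = 0" "y mod f = y" using mod_poly_less by metis+
    then have "A_scale f y g = b" using xy g by (simp add: A_scale_def)
    then show ?thesis using A_scale_g_in_code by metis
  qed
  ultimately show "C = dualR_code f l C" by blast
qed

lemma self_dualR_iff_2_lead_ind_0:
  assumes l: "l = 2" and lead_ind: "lead_ind = 0"
  shows "C = dualR_code f l C \<longleftrightarrow> g ! 0 = 1 \<and> (g ! 1 = 0 \<or> CHAR('a) = 2)"
proof
  assume self_dual: "C = dualR_code f l C"
  obtain w where "degree w < degree f" "(w * g ! 0 + g ! 1) mod f = 0"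
    using quotient_by_lead_2[OF l lead_ind] .
  then have "[1, w] \<in> C" using self_dual mem_dualR_code_2[OF l] degree_f_pos by simp
  then have g0: "g ! 0 = 1" using lead_eq_1_if_entry_1[of "[1, w]" 0] l lead_ind by simp
  have "g \<in> dualR_code f l C" using self_dual g_in_code by simp
  then have "(g ! 1 + g ! 1) mod f = 0"
    using mem_dualR_code_2[OF l] length_g l length_eq_2_conv g0 by (metis mult_1 mult.commute)
  moreover have "degree (g ! 1 + g ! 1) < degree f"
    using degree_codeword[OF g_in_code, of 1] l degree_add_le_max[of "g ! 1" "g ! 1"] by simp
  ultimately have "g ! 1 + g ! 1 = 0" using mod_poly_less[of "g ! 1 + g ! 1" f] by simp
  then show "g ! 0 = 1 \<and> (g ! 1 = 0 \<or> CHAR('a) = 2)"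
    using g0 double_eq_zero_iff[of "g ! 1"] by auto
next
  assume asm: "g ! 0 = 1 \<and> (g ! 1 = 0 \<or> CHAR('a) = 2)"
  define t where "t = g ! 1"
  have g: "g = [1, t]" using asm length_g l length_eq_2_conv unfolding t_def by metis
  have tt: "t + t = 0" using asm double_eq_zero_iff[of t] unfolding t_def by auto
  have "A_dot f (rev g) g = (t + t) mod f" using g by (simp add: A_dot_def)
  then have "C \<subseteq> dualR_code f l C" unfolding code_subset_dualR_iff tt by simp
  moreover have "b \<in> C" if b: "b \<in> dualR_code f l C" for b
  proof -
    obtain x y where xy: "b = [x, y]" using pair_cases length_dualR_code[OF b] l by metis
    then have "degree x < degree f" "degree y < degree f" "f dvd y + x * t"
      using b mem_dualR_code_2[OF l] g by (auto simp: mod_eq_0_iff_dvd)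
    moreover have "y - x * t = (y + x * t) - x * (t + t)" by (simp add: algebra_simps)
    ultimately have "(x * t) mod f = y"
      using tt mod_poly_less by (metis mod_eq_dvd_iff mult_zero_right diff_zero)
    then show ?thesis using graph_in_code_2[OF l _ \<open>degree x < degree f\<close>] xy g by simp
  qed
  ultimately show "C = dualR_code f l C" by blast
qed

lemma self_dualR_iff_2:
  assumes l: "l = 2"
  shows "C = dualR_code f l C \<longleftrightarrow> (g ! 0 = 0 \<and> g ! 1 = 1) \<or> (g ! 0 = 1 \<and> g ! 1 = 0)
           \<or> (CHAR('a) = 2 \<and> g ! 0 = 1)"
proof (cases "lead_ind = 0")
  case True
  then show ?thesis using self_dualR_iff_2_lead_ind_0[OF l] lead_nonzero by auto
next
  case False
  then have "lead_ind = 1" using lead_ind_less l by simp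
  then show ?thesis using self_dualR_iff_2_lead_ind_1[OF l] g_before_lead[of 0] by auto
qed

end

theorem mainTheorem4:
  fixes f :: "'a::{field,finite} poly" and l :: nat
    and C :: "'a poly list set" and g :: "'a poly list"
  assumes "lead_coeff f = 1"
    and "A_code f l C"
    and "basis_of_divisors C [g]"
  shows "(C = dual_code f l C \<longleftrightarrow>
            (l = 1 \<and> f = (g ! 0)^2)
          \<or> (l = 2 \<and> g ! 0 = 1 \<and> ((g ! 1)^2) mod f = (-1) mod f))
    \<and> (C = dualR_code f l C \<longleftrightarrow>
            (l = 1 \<and> f = (g ! 0)^2)
          \<or> (l = 2 \<and> g ! 0 = 0 \<and> g ! 1 = 1)
          \<or> (l = 2 \<and> g ! 0 = 1 \<and> g ! 1 = 0)
          \<or> (l = 2 \<and> CHAR('a) = 2 \<and> g ! 0 = 1))"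
proof -
  interpret single_divisor_code f l C g
    using assms by unfold_locales
  consider "l = 1" | "l = 2" | "3 \<le> l"
    using lead_ind_less by linarith
  then show ?thesis
  proof cases
    case 1
    then show ?thesis using self_dual_iff_1 dualR_eq_dual_if_1 by simp
  next
    case 2
    then show ?thesis using self_dual_iff_2 self_dualR_iff_2 by simp
  next
    case 3
    then show ?thesis using not_self_dual_if_3_le not_self_dualR_if_3_le by simp
  qed
qed

end
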